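(* Let $G$ be a maximal outerplanar graph of order $n\geq 3$, and let $t$ be the number of vertices of degree $2$ in $G$. Then $\gamma_{\times 2}(G)\leq \lfloor \frac{n+t}{2}\rfloor$. *)

theory Defs
  imports Main
begin

definition simple_graph :: "'a set \<Rightarrow> ('a \<Rightarrow> 'a \<Rightarrow> bool) \<Rightarrow> bool" where
  "simple_graph V E \<longleftrightarrow> finite V \<and>
     (\<forall>u v. E u v \<longrightarrow> u \<in> V \<and> v \<in> V \<and> u \<noteq> v \<and> E v u)"

text \<open>Outerplanar: the vertices can be placed in convex position (cyclic order
  given by a bijection onto positions 0..n-1) such that no two edges cross
  (one-page book embedding / convex drawing characterization).\<close>
definition outerplanar :: "'a set \<Rightarrow> ('a \<Rightarrow> 'a \<Rightarrow> bool) \<Rightarrow> bool" where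
  "outerplanar V E \<longleftrightarrow> simple_graph V E \<and>
     (\<exists>f :: 'a \<Rightarrow> nat. bij_betw f V {..<card V} \<and>
        (\<forall>a b c d. E a b \<longrightarrow> E c d \<longrightarrow> \<not> (f a < f c \<and> f c < f b \<and> f b < f d)))"

definition add_edge :: "('a \<Rightarrow> 'a \<Rightarrow> bool) \<Rightarrow> 'a \<Rightarrow> 'a \<Rightarrow> ('a \<Rightarrow> 'a \<Rightarrow> bool)" where
  "add_edge E u v = (\<lambda>x y. E x y \<or> (x = u \<and> y = v) \<or> (x = v \<and> y = u))"

definition maximal_outerplanar :: "'a set \<Rightarrow> ('a \<Rightarrow> 'a \<Rightarrow> bool) \<Rightarrow> bool" where
  "maximal_outerplanar V E \<longleftrightarrow> outerplanar V E \<and>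
     (\<forall>u\<in>V. \<forall>v\<in>V. u \<noteq> v \<and> \<not> E u v \<longrightarrow> \<not> outerplanar V (add_edge E u v))"

definition degree :: "'a set \<Rightarrow> ('a \<Rightarrow> 'a \<Rightarrow> bool) \<Rightarrow> 'a \<Rightarrow> nat" where
  "degree V E v = card {u \<in> V. E v u}"

definition closed_nbhd :: "'a set \<Rightarrow> ('a \<Rightarrow> 'a \<Rightarrow> bool) \<Rightarrow> 'a \<Rightarrow> 'a set" where
  "closed_nbhd V E v = insert v {u \<in> V. E v u}"

definition double_dominating :: "'a set \<Rightarrow> ('a \<Rightarrow> 'a \<Rightarrow> bool) \<Rightarrow> 'a set \<Rightarrow> bool" where
  "double_dominating V E S \<longleftrightarrow> S \<subseteq> V \<and> (\<forall>v\<in>V. card (closed_nbhd V E v \<inter> S) \<ge> 2)"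

definition double_domination_number :: "'a set \<Rightarrow> ('a \<Rightarrow> 'a \<Rightarrow> bool) \<Rightarrow> nat" where
  "double_domination_number V E = Min {card S | S. double_dominating V E S}"

end

theory Submission
  imports Defs
begin

(* Number the vertices 0, ..., n - 1 along the outer cycle. An edge ij with i < j cuts off the
   polygon on i, ..., j, whose interior vertices have all their neighbours in it; unless j = i + 1,
   it is split by the apex k of its inner triangle ijk into the polygons of ik and kj. For an edge
   and a boundary state (are i, j in the set; must the set contain a neighbour of i, of j) we ask
   for a set S of interior vertices dominating every interior vertex twice with
   2 |S| <= #interior vertices + #interior vertices of degree 2 + b.
   A family of nine lists of achievable (state, budget b) pairs is closed under gluing two edges at
   an apex, and any two members combine at a root triangle 0 k (n - 1) into a double dominating set
   of size at most (n + t) / 2; both are finite checks done by evaluation, and induction along the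
   decomposition finishes the proof. *)

lemma double_domination_number_le:
  assumes "finite V" "double_dominating V E S"
  shows "double_domination_number V E \<le> card S"
  unfolding double_domination_number_def
proof (rule Min_le)
  have "{card S |S. double_dominating V E S} \<subseteq> {..card V}"
    using assms(1) by (auto simp: double_dominating_def intro: card_mono)
  then show "finite {card S |S. double_dominating V E S}"
    using finite_subset by blast
  show "card S \<in> {card S |S. double_dominating V E S}"
    using assms(2) by blast
qed

lemma bij_betw_card_image_subset: "bij_betw g W V \<Longrightarrow> A \<subseteq> W \<Longrightarrow> card (g ` A) = card A"
  by (meson bij_betw_def card_image inj_on_subset)

context
  fixes g :: "'b \<Rightarrow> 'a" and W :: "'b set" and R :: "'b \<Rightarrow> 'b \<Rightarrow> bool"
    and V :: "'a set" and E :: "'a \<Rightarrow> 'a \<Rightarrow> bool"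
  assumes bij: "bij_betw g W V"
    and adj: "\<And>x y. x \<in> W \<Longrightarrow> y \<in> W \<Longrightarrow> E (g x) (g y) \<longleftrightarrow> R x y"
begin

lemma neighbours_image: "x \<in> W \<Longrightarrow> {u \<in> V. E (g x) u} = g ` {y \<in> W. R x y}"
  using bij adj by (auto simp: bij_betw_def)

lemma closed_nbhd_image: "x \<in> W \<Longrightarrow> closed_nbhd V E (g x) = g ` closed_nbhd W R x"
  by (simp add: closed_nbhd_def neighbours_image)

lemma degree_image: "x \<in> W \<Longrightarrow> degree V E (g x) = degree W R x"
  by (simp add: degree_def neighbours_image bij_betw_card_image_subset[OF bij])

lemma card_degree_2_image: "card {v \<in> V. degree V E v = 2} = card {x \<in> W. degree W R x = 2}"
proof -
  have "{v \<in> V. degree V E v = 2} = g ` {x \<in> W. degree W R x = 2}"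
    using bij degree_image by (auto simp: bij_betw_def)
  then show ?thesis
    by (simp add: bij_betw_card_image_subset[OF bij])
qed

lemma double_dominating_image:
  assumes "double_dominating W R S"
  shows "double_dominating V E (g ` S)"
  unfolding double_dominating_def
proof
  have S: "S \<subseteq> W"
    using assms by (simp add: double_dominating_def)
  then show "g ` S \<subseteq> V"
    using bij by (auto simp: bij_betw_def)
  have inj: "inj_on g W"
    using bij by (simp add: bij_betw_def)
  show "\<forall>v\<in>V. 2 \<le> card (closed_nbhd V E v \<inter> g ` S)"
  proof
    fix v assume "v \<in> V"
    then obtain x where x: "x \<in> W" "v = g x"
      using bij by (auto simp: bij_betw_def)
    have N: "closed_nbhd W R x \<subseteq> W"
      using x by (auto simp: closed_nbhd_def)
    have "closed_nbhd V E v \<inter> g ` S = g ` (closed_nbhd W R x \<inter> S)"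
      using x closed_nbhd_image inj_on_image_Int[OF inj N S] by simp
    moreover have "card (g ` (closed_nbhd W R x \<inter> S)) = card (closed_nbhd W R x \<inter> S)"
      using N by (auto intro: bij_betw_card_image_subset[OF bij])
    ultimately show "2 \<le> card (closed_nbhd V E v \<inter> g ` S)"
      using assms x by (simp add: double_dominating_def)
  qed
qed

end

lemma outerplanar_add_edge:
  assumes "simple_graph V E" and f: "bij_betw f V {..<card V}"
    and noncrossing: "\<And>a b c d. E a b \<Longrightarrow> E c d \<Longrightarrow> \<not> (f a < f c \<and> f c < f b \<and> f b < f d)"
    and uv: "u \<in> V" "v \<in> V" "f u < f v"
    and uncrossed: "\<And>a b. E a b \<Longrightarrow>
      \<not> (f a < f u \<and> f u < f b \<and> f b < f v) \<and> \<not> (f u < f a \<and> f a < f v \<and> f v < f b)"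
  shows "outerplanar V (add_edge E u v)"
  unfolding outerplanar_def
proof (intro conjI exI)
  show "simple_graph V (add_edge E u v)"
    using assms(1) uv by (auto simp: simple_graph_def add_edge_def)
  show "bij_betw f V {..<card V}"
    by (fact f)
  show "\<forall>a b c d. add_edge E u v a b \<longrightarrow> add_edge E u v c d \<longrightarrow>
      \<not> (f a < f c \<and> f c < f b \<and> f b < f d)"
    unfolding add_edge_def using noncrossing uncrossed uv(3) by fastforce
qed

definition selected :: "bool \<Rightarrow> 'a \<Rightarrow> 'a set" where
  "selected p x = (if p then {x} else {})"

lemma length_filter_fst_le_card:
  fixes xs :: "(bool \<times> 'a::linorder) list"
  assumes "finite M" "sorted_wrt (<) (map snd (filter fst xs))" "\<forall>(p, x) \<in> set xs. p \<longrightarrow> x \<in> M"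
  shows "length (filter fst xs) \<le> card M"
proof -
  have "length (filter fst xs) = card (set (map snd (filter fst xs)))"
    using assms(2) by (metis strict_sorted_iff distinct_card length_map)
  also have "\<dots> \<le> card M"
    using assms(1,3) by (intro card_mono) auto
  finally show ?thesis .
qed

lemma card_glued:
  fixes k :: nat
  assumes "S1 \<subseteq> {i<..<k}" "S2 \<subseteq> {k<..<j}"
  shows "card (S1 \<union> S2 \<union> selected p k) = card S1 + card S2 + of_bool p"
proof -
  have "finite S1" "finite S2"
    using assms finite_subset by blast+
  moreover have "S1 \<inter> S2 = {}" "k \<notin> S1 \<union> S2"
    using assms by fastforce+
  ultimately show ?thesis
    by (simp add: selected_def card_Un_disjoint)
qed

(* Vertices 0, ..., n - 1 in the order of the outer cycle. *)
locale triangulated_polygon =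
  fixes n :: nat and R :: "nat \<Rightarrow> nat \<Rightarrow> bool"
  assumes edge_less: "R i j \<Longrightarrow> j < n"
    and edge_irrefl: "\<not> R i i"
    and edge_sym: "R i j \<Longrightarrow> R j i"
    and edges_noncrossing: "R a b \<Longrightarrow> R c d \<Longrightarrow> \<not> (a < c \<and> c < b \<and> b < d)"
    and edge_if_uncrossed: "i < j \<Longrightarrow> j < n \<Longrightarrow>
      (\<And>a b. R a b \<Longrightarrow> \<not> (a < i \<and> i < b \<and> b < j) \<and> \<not> (i < a \<and> a < j \<and> j < b)) \<Longrightarrow> R i j"

lemma maximal_outerplanar_edgeI:
  assumes "maximal_outerplanar V E" and f: "bij_betw f V {..<card V}"
    and noncrossing: "\<And>a b c d. E a b \<Longrightarrow> E c d \<Longrightarrow> \<not> (f a < f c \<and> f c < f b \<and> f b < f d)"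
    and uv: "u \<in> V" "v \<in> V" "f u < f v"
    and uncrossed: "\<And>a b. E a b \<Longrightarrow>
      \<not> (f a < f u \<and> f u < f b \<and> f b < f v) \<and> \<not> (f u < f a \<and> f a < f v \<and> f v < f b)"
  shows "E u v"
proof (rule ccontr)
  assume no_edge: "\<not> E u v"
  have "simple_graph V E"
    using assms(1) by (simp add: maximal_outerplanar_def outerplanar_def)
  then have "outerplanar V (add_edge E u v)"
    using f noncrossing uv uncrossed by (rule outerplanar_add_edge)
  with no_edge show False
    using assms(1) uv by (auto simp: maximal_outerplanar_def)
qed

lemma maximal_outerplanar_triangulated_polygon:
  assumes "maximal_outerplanar V E"
  obtains g where "bij_betw g {..<card V} V"
    and "triangulated_polygon (card V) (\<lambda>i j. i < card V \<and> j < card V \<and> E (g i) (g j))"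
proof -
  let ?n = "card V"
  have "outerplanar V E"
    using assms by (simp add: maximal_outerplanar_def)
  then have E: "\<And>u v. E u v \<Longrightarrow> u \<in> V \<and> v \<in> V \<and> u \<noteq> v \<and> E v u"
    and "\<exists>f. bij_betw f V {..<?n} \<and> (\<forall>a b c d. E a b \<longrightarrow> E c d \<longrightarrow> \<not> (f a < f c \<and> f c < f b \<and> f b < f d))"
    by (auto simp: outerplanar_def simple_graph_def)
  then obtain f where f: "bij_betw f V {..<?n}"
    and noncrossing: "\<And>a b c d. E a b \<Longrightarrow> E c d \<Longrightarrow> \<not> (f a < f c \<and> f c < f b \<and> f b < f d)"
    by blast
  define g where "g = inv_into V f"
  have g: "bij_betw g {..<?n} V"
    unfolding g_def using f by (rule bij_betw_inv_into)
  have fg: "\<And>i. i < ?n \<Longrightarrow> f (g i) = i" and gf: "\<And>v. v \<in> V \<Longrightarrow> g (f v) = v"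
    unfolding g_def using f by (auto simp: bij_betw_inv_into_right bij_betw_inv_into_left)
  have fV: "\<And>v. v \<in> V \<Longrightarrow> f v < ?n" and gV: "\<And>i. i < ?n \<Longrightarrow> g i \<in> V"
    using f g by (auto simp: bij_betw_def)
  have "triangulated_polygon ?n (\<lambda>i j. i < ?n \<and> j < ?n \<and> E (g i) (g j))"
  proof
    fix a b c d
    assume "a < ?n \<and> b < ?n \<and> E (g a) (g b)" "c < ?n \<and> d < ?n \<and> E (g c) (g d)"
    then show "\<not> (a < c \<and> c < b \<and> b < d)"
      using noncrossing[of "g a" "g b" "g c" "g d"] fg by auto
  next
    fix i j
    assume ij: "i < j" "j < ?n" and uncrossed: "\<And>a b. a < ?n \<and> b < ?n \<and> E (g a) (g b) \<Longrightarrow>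
      \<not> (a < i \<and> i < b \<and> b < j) \<and> \<not> (i < a \<and> a < j \<and> j < b)"
    have "E (g i) (g j)"
    proof (rule maximal_outerplanar_edgeI[OF assms f noncrossing])
      show "g i \<in> V" "g j \<in> V" "f (g i) < f (g j)"
        using ij gV fg by auto
      fix a b assume "E a b"
      then show "\<not> (f a < f (g i) \<and> f (g i) < f b \<and> f b < f (g j)) \<and>
        \<not> (f (g i) < f a \<and> f a < f (g j) \<and> f (g j) < f b)"
        using uncrossed[of "f a" "f b"] E fV gf fg ij by auto
    qed
    with ij show "i < ?n \<and> j < ?n \<and> E (g i) (g j)"
      by simp
  qed (use E in auto)
  with g show thesis
    by (rule that)
qed

context triangulated_polygon
begin

lemma closed_nbhd_eq: "closed_nbhd {..<n} R v = insert v {u. R v u}"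
  using edge_less by (auto simp: closed_nbhd_def)

lemma degree_eq: "degree {..<n} R v = card {u. R v u}"
  using edge_less by (auto simp: degree_def intro: arg_cong[where f = card])

lemma cycle_edge: "Suc i < n \<Longrightarrow> R i (Suc i)"
  by (rule edge_if_uncrossed) auto

lemma closing_edge: "2 \<le> n \<Longrightarrow> R 0 (n - 1)"
  by (rule edge_if_uncrossed) (auto dest: edge_less)

lemma neighbour_within_chord:
  assumes "R i j" "i < v" "v < j" "R v w"
  shows "w \<in> {i..j}"
  using edges_noncrossing[OF edge_sym[OF assms(4)] assms(1)] edges_noncrossing[OF assms(1,4)] assms(2,3)
  by (cases "w < i") auto

lemma closed_nbhd_within_chord: "R i j \<Longrightarrow> v \<in> {i<..<j} \<Longrightarrow> closed_nbhd {..<n} R v \<subseteq> {i..j}"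
  using neighbour_within_chord by (auto simp: closed_nbhd_eq)

lemma apex_exists:
  assumes ij: "R i j" "Suc i < j"
  obtains k where "i < k" "k < j" "R i k" "R k j"
proof -
  let ?K = "{k. i < k \<and> k < j \<and> R i k}"
  define k where "k = Max ?K"
  have "Suc i \<in> ?K"
    using cycle_edge[of i] ij edge_less[OF ij(1)] by auto
  then have nonempty: "?K \<noteq> {}"
    by blast
  have finite: "finite ?K"
    by (rule finite_subset[of _ "{..<j}"]) auto
  have k: "k \<in> ?K"
    unfolding k_def using Max_in[OF finite nonempty] .
  have k_max: "\<And>b. b \<in> ?K \<Longrightarrow> b \<le> k"
    unfolding k_def using Max_ge[OF finite] by blast
  have "R k j"
  proof (rule edge_if_uncrossed)
    show "k < j" "j < n"
      using k edge_less ij by auto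
    fix a b assume ab: "R a b"
    have "\<not> (a < k \<and> k < b \<and> b < j)"
      using edges_noncrossing[OF ab ij(1)] edges_noncrossing[of i k a b] k_max[of b] k ab by force
    moreover have "\<not> (k < a \<and> a < j \<and> j < b)"
      using edges_noncrossing[OF ij(1) ab] k by auto
    ultimately show "\<not> (a < k \<and> k < b \<and> b < j) \<and> \<not> (k < a \<and> a < j \<and> j < b)" ..
  qed
  with k show thesis
    using that by blast
qed

lemma degree_eq_2I: "{u. R v u} = {a, b} \<Longrightarrow> a \<noteq> b \<Longrightarrow> degree {..<n} R v = 2"
  by (simp add: degree_eq)

lemma ear_apex:
  assumes "R i (Suc (Suc i))"
  shows "degree {..<n} R (Suc i) = 2"
proof (rule degree_eq_2I)
  have "Suc (Suc i) < n"
    using assms edge_less by blast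
  then have "R (Suc i) i" "R (Suc i) (Suc (Suc i))"
    using cycle_edge edge_sym by auto
  moreover have "w = i \<or> w = Suc (Suc i)" if "R (Suc i) w" for w
    using neighbour_within_chord[OF assms _ _ that] edge_irrefl[of "Suc i"] that
    by (cases "w = Suc i") (auto simp: le_Suc_eq)
  ultimately show "{u. R (Suc i) u} = {i, Suc (Suc i)}"
    by blast
qed simp

lemma ear_first:
  assumes "3 \<le> n" "R 1 (n - 1)"
  shows "degree {..<n} R 0 = 2"
proof (rule degree_eq_2I)
  have "R 0 w \<longleftrightarrow> w = 1 \<or> w = n - 1" for w
  proof
    assume w: "R 0 w"
    then have "0 < w" "w < n" "\<not> (1 < w \<and> w < n - 1)"
      using edge_irrefl edge_less edges_noncrossing[OF w assms(2)] by (auto intro: gr0I)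
    then show "w = 1 \<or> w = n - 1"
      by linarith
  next
    assume "w = 1 \<or> w = n - 1"
    then show "R 0 w"
      using cycle_edge[of 0] closing_edge assms(1) by auto
  qed
  then show "{u. R 0 u} = {1, n - 1}"
    by auto
qed (use assms in simp)

lemma ear_last:
  assumes "3 \<le> n" "R 0 (n - 2)"
  shows "degree {..<n} R (n - 1) = 2"
proof (rule degree_eq_2I)
  have "R (n - 1) w \<longleftrightarrow> w = 0 \<or> w = n - 2" for w
  proof
    assume w: "R (n - 1) w"
    then have "w < n" "w \<noteq> n - 1" "\<not> (0 < w \<and> w < n - 2)"
      using edge_irrefl edge_less edges_noncrossing[OF assms(2) edge_sym[OF w]] by auto
    then show "w = 0 \<or> w = n - 2"
      using assms(1) by linarith
  next
    assume "w = 0 \<or> w = n - 2"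
    moreover have "R (n - 2) (n - 1)"
      using cycle_edge[of "n - 2"] assms(1) by (simp add: Suc_diff_Suc numeral_2_eq_2)
    ultimately show "R (n - 1) w"
      using closing_edge assms(1) edge_sym by auto
  qed
  then show "{u. R (n - 1) u} = {0, n - 2}"
    by auto
qed (use assms in simp)

definition dominated_twice :: "nat set \<Rightarrow> nat \<Rightarrow> bool" where
  "dominated_twice T v \<longleftrightarrow> 2 \<le> card (closed_nbhd {..<n} R v \<inter> T)"

(* Listing the candidate dominators of v in increasing order certifies that they are distinct. *)
lemma dominated_twiceI:
  assumes "2 \<le> (\<Sum>(p, x) \<leftarrow> xs. of_bool p :: int)" "sorted_wrt (<) (map snd (filter fst xs))"
    and "\<forall>(p, x) \<in> set xs. p \<longrightarrow> x \<in> T \<and> (x = v \<or> R v x)"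
  shows "dominated_twice T v"
proof -
  have "int (length (filter fst xs)) = (\<Sum>(p, x) \<leftarrow> xs. of_bool p)"
    by (induction xs) auto
  moreover have "finite (closed_nbhd {..<n} R v \<inter> T)"
    by (simp add: closed_nbhd_def)
  then have "length (filter fst xs) \<le> card (closed_nbhd {..<n} R v \<inter> T)"
    by (rule length_filter_fst_le_card) (use assms(2,3) in \<open>auto simp: closed_nbhd_eq\<close>)
  ultimately show ?thesis
    using assms(1) by (simp add: dominated_twice_def)
qed

lemma dominated_twice_local:
  assumes "closed_nbhd {..<n} R v \<subseteq> A" "T \<inter> A = T' \<inter> A"
  shows "dominated_twice T v \<longleftrightarrow> dominated_twice T' v"
proof -
  have "closed_nbhd {..<n} R v \<inter> T = closed_nbhd {..<n} R v \<inter> T'"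
    using assms by blast
  then show ?thesis
    by (simp add: dominated_twice_def)
qed

definition ears :: "nat set \<Rightarrow> nat" where
  "ears A = card {v \<in> A. degree {..<n} R v = 2}"

lemma ears_Un: "finite A \<Longrightarrow> finite B \<Longrightarrow> A \<inter> B = {} \<Longrightarrow> ears (A \<union> B) = ears A + ears B"
  unfolding ears_def by (subst card_Un_disjoint[symmetric]) (auto intro: arg_cong[where f = card])

lemma ears_singleton: "ears {v} = of_bool (degree {..<n} R v = 2)"
proof -
  have "{u \<in> {v}. degree {..<n} R u = 2} = (if degree {..<n} R v = 2 then {v} else {})"
    by auto
  then show ?thesis
    by (simp add: ears_def)
qed

lemma ears_split:
  assumes "i < k" "k < j"
  shows "ears {i<..<j} = ears {i<..<k} + of_bool (degree {..<n} R k = 2) + ears {k<..<j}"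
proof -
  have "{i<..<j} = {i<..<k} \<union> {k} \<union> {k<..<j}"
    using assms by auto
  then have "ears {i<..<j} = ears ({i<..<k} \<union> {k}) + ears {k<..<j}"
    by (simp only:) (rule ears_Un, auto)
  also have "ears ({i<..<k} \<union> {k}) = ears {i<..<k} + ears {k}"
    by (rule ears_Un) auto
  finally show ?thesis
    by (simp add: ears_singleton)
qed

(* si, sj: the ends i, j belong to the dominating set; ci, cj: S must contain a neighbour of i, j. *)
definition chord_solution :: "nat \<Rightarrow> nat \<Rightarrow> bool \<Rightarrow> bool \<Rightarrow> bool \<Rightarrow> bool \<Rightarrow> nat set \<Rightarrow> bool" where
  "chord_solution i j si sj ci cj S \<longleftrightarrow> S \<subseteq> {i<..<j} \<and>
     (\<forall>v\<in>{i<..<j}. dominated_twice (S \<union> selected si i \<union> selected sj j) v) \<and>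
     (ci \<longrightarrow> (\<exists>u\<in>S. R i u)) \<and> (cj \<longrightarrow> (\<exists>u\<in>S. R j u))"

definition realizes :: "nat \<Rightarrow> nat \<Rightarrow> bool \<Rightarrow> bool \<Rightarrow> bool \<Rightarrow> bool \<Rightarrow> int \<Rightarrow> bool" where
  "realizes i j si sj ci cj b \<longleftrightarrow> (\<exists>S. chord_solution i j si sj ci cj S \<and>
     2 * int (card S) \<le> int (card {i<..<j}) + int (ears {i<..<j}) + b)"

lemma realizes_mono: "realizes i j si sj ci cj b \<Longrightarrow> b \<le> b' \<Longrightarrow> realizes i j si sj ci cj b'"
  unfolding realizes_def by fastforce

lemma realizes_cycle_edge: "realizes i (Suc i) si sj False False 0"
  unfolding realizes_def chord_solution_def by (rule exI[of _ "{}"]) auto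

lemma chord_solutions_glue:
  assumes "i < k" "k < j" "R i k" "R k j"
    and S1: "chord_solution i k si sk c1i c1k S1" and S2: "chord_solution k j sk sj c2k c2j S2"
  shows "\<forall>v \<in> {i<..<k} \<union> {k<..<j}.
    dominated_twice (S1 \<union> S2 \<union> selected sk k \<union> selected si i \<union> selected sj j) v"
proof
  let ?T = "S1 \<union> S2 \<union> selected sk k \<union> selected si i \<union> selected sj j"
  have sub: "S1 \<subseteq> {i<..<k}" "S2 \<subseteq> {k<..<j}"
    using S1 S2 by (simp_all add: chord_solution_def)
  fix v assume "v \<in> {i<..<k} \<union> {k<..<j}"
  then consider "v \<in> {i<..<k}" | "v \<in> {k<..<j}"
    by blast
  then show "dominated_twice ?T v"
  proof cases
    case 1
    have "S2 \<inter> {i..k} = {}" "selected sj j \<inter> {i..k} = {}"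
      using sub assms(2) by (auto simp: selected_def)
    then have "?T \<inter> {i..k} = (S1 \<union> selected si i \<union> selected sk k) \<inter> {i..k}"
      by blast
    moreover have "dominated_twice (S1 \<union> selected si i \<union> selected sk k) v"
      using 1 S1 by (simp add: chord_solution_def)
    ultimately show ?thesis
      using dominated_twice_local[OF closed_nbhd_within_chord[OF assms(3) 1]] by blast
  next
    case 2
    have "S1 \<inter> {k..j} = {}" "selected si i \<inter> {k..j} = {}"
      using sub assms(1) by (auto simp: selected_def)
    then have "?T \<inter> {k..j} = (S2 \<union> selected sk k \<union> selected sj j) \<inter> {k..j}"
      by blast
    moreover have "dominated_twice (S2 \<union> selected sk k \<union> selected sj j) v"
      using 2 S2 by (simp add: chord_solution_def)
    ultimately show ?thesis
      using dominated_twice_local[OF closed_nbhd_within_chord[OF assms(4) 2]] by blast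
  qed
qed

lemma dominated_twice_apex:
  assumes ik: "i < k" "k < j" "R i k" "R k j"
    and S1: "chord_solution i k si sk c1i c1k S1" and S2: "chord_solution k j sk sj c2k c2j S2"
    and count: "2 \<le> of_bool si + of_bool c1k + of_bool sk + of_bool c2k + (of_bool sj :: int)"
  shows "dominated_twice (S1 \<union> S2 \<union> selected sk k \<union> selected si i \<union> selected sj j) k"
proof -
  obtain u1 where u1: "c1k \<Longrightarrow> u1 \<in> S1 \<and> R k u1"
    using S1 by (auto simp: chord_solution_def)
  obtain u2 where u2: "c2k \<Longrightarrow> u2 \<in> S2 \<and> R k u2"
    using S2 by (auto simp: chord_solution_def)
  have "c1k \<Longrightarrow> i < u1 \<and> u1 < k" "c2k \<Longrightarrow> k < u2 \<and> u2 < j"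
    using u1 u2 S1 S2 by (auto simp: chord_solution_def)
  then show ?thesis
    using u1 u2 ik edge_sym count
    by (intro dominated_twiceI[where xs = "[(si, i), (c1k, u1), (sk, k), (c2k, u2), (sj, j)]"])
      (auto simp: selected_def add.assoc)
qed

lemma realizes_glue:
  assumes ik: "i < k" "k < j" "R i k" "R k j"
    and r1: "realizes i k si sk c1i c1k b1" and r2: "realizes k j sk sj c2k c2j b2"
    and count: "2 \<le> of_bool si + of_bool c1k + of_bool sk + of_bool c2k + (of_bool sj :: int)"
    and ci: "ci \<longrightarrow> c1i \<or> sk" and cj: "cj \<longrightarrow> c2j \<or> sk"
    and ear: "ear \<Longrightarrow> degree {..<n} R k = 2"
  shows "realizes i j si sj ci cj (b1 + b2 + 2 * of_bool sk - 1 - of_bool ear)"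
proof -
  obtain S1 where S1: "chord_solution i k si sk c1i c1k S1"
    and size1: "2 * int (card S1) \<le> int (card {i<..<k}) + int (ears {i<..<k}) + b1"
    using r1 by (auto simp: realizes_def)
  obtain S2 where S2: "chord_solution k j sk sj c2k c2j S2"
    and size2: "2 * int (card S2) \<le> int (card {k<..<j}) + int (ears {k<..<j}) + b2"
    using r2 by (auto simp: realizes_def)
  have sub: "S1 \<subseteq> {i<..<k}" "S2 \<subseteq> {k<..<j}"
    using S1 S2 by (simp_all add: chord_solution_def)
  define S where "S = S1 \<union> S2 \<union> selected sk k"
  have "{i<..<j} = {i<..<k} \<union> {k<..<j} \<union> {k}"
    using ik by auto
  then have "chord_solution i j si sj ci cj S"
    using chord_solutions_glue[OF ik S1 S2] dominated_twice_apex[OF ik S1 S2 count]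
      sub ik ci cj S1 S2 edge_sym
    by (auto simp: chord_solution_def S_def selected_def)
  moreover have "2 * int (card S) \<le> int (card {i<..<j}) + int (ears {i<..<j})
      + (b1 + b2 + 2 * of_bool sk - 1 - of_bool ear)"
    using size1 size2 card_glued[OF sub] ears_split[OF ik(1,2)] ear ik(1,2)
    by (auto simp: S_def)
  ultimately show ?thesis
    by (auto simp: realizes_def)
qed


lemma ears_polygon_split:
  assumes "0 < k" "k < n - 1"
  shows "ears {..<n} = of_bool (degree {..<n} R 0 = 2) + ears {0<..<k} + of_bool (degree {..<n} R k = 2)
    + ears {k<..<n - 1} + of_bool (degree {..<n} R (n - 1) = 2)"
proof -
  have "{..<n} = {0} \<union> {0<..<n - 1} \<union> {n - 1}"
    using assms by (auto simp: le_less)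
  then have "ears {..<n} = ears ({0} \<union> {0<..<n - 1}) + ears {n - 1}"
    by (simp only:) (rule ears_Un, use assms in auto)
  also have "ears ({0} \<union> {0<..<n - 1}) = ears {0} + ears {0<..<n - 1}"
    by (rule ears_Un) auto
  also have "ears {0<..<n - 1} = ears {0<..<k} + of_bool (degree {..<n} R k = 2) + ears {k<..<n - 1}"
    using assms by (rule ears_split)
  finally show ?thesis
    by (simp add: ears_singleton)
qed

lemma ears_root_ge:
  assumes n: "3 \<le> n" and k: "0 < k" "k < n - 1" "R 0 k" "R k (n - 1)"
    and t1: "t1 \<Longrightarrow> k = 1" and t2: "t2 \<Longrightarrow> k = n - 2"
  shows "int (ears {0<..<k}) + int (ears {k<..<n - 1}) + of_bool t1 + of_bool t2 + of_bool (t1 \<and> t2)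
    \<le> int (ears {..<n})"
proof -
  have closing: "R 0 (n - 1)"
    using closing_edge n by simp
  have "t1 \<Longrightarrow> degree {..<n} R 0 = 2"
    using ear_first[OF n] k t1 by simp
  moreover have "t2 \<Longrightarrow> degree {..<n} R (n - 1) = 2"
    using ear_last[OF n] k t2 by simp
  moreover have "degree {..<n} R k = 2" if "t1" "t2"
  proof -
    have "k = Suc 0" "n - 1 = Suc (Suc 0)"
      using t1 t2 that n by auto
    then show ?thesis
      using ear_apex[of 0] closing by simp
  qed
  ultimately show ?thesis
    using ears_polygon_split[OF k(1,2)] by auto
qed

lemma chord_solutions_root_glue:
  assumes n: "3 \<le> n" and k: "0 < k" "k < n - 1" "R 0 k" "R k (n - 1)"
    and S1: "chord_solution 0 k s0 sk c0 c1k S1" and S2: "chord_solution k (n - 1) sk sn c2k cn S2"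
    and count_k: "2 \<le> of_bool s0 + of_bool c1k + of_bool sk + of_bool c2k + (of_bool sn :: int)"
    and count_0: "2 \<le> of_bool s0 + of_bool c0 + of_bool sk + (of_bool sn :: int)"
    and count_n: "2 \<le> of_bool s0 + of_bool sk + of_bool cn + (of_bool sn :: int)"
  shows "double_dominating {..<n} R (S1 \<union> S2 \<union> selected sk k \<union> selected s0 0 \<union> selected sn (n - 1))"
    (is "double_dominating _ _ ?T")
proof -
  have sub: "S1 \<subseteq> {0<..<k}" "S2 \<subseteq> {k<..<n - 1}"
    using S1 S2 by (simp_all add: chord_solution_def)
  have closing: "R 0 (n - 1)"
    using closing_edge n by simp
  obtain u0 where u0: "c0 \<Longrightarrow> u0 \<in> S1 \<and> R 0 u0"
    using S1 by (auto simp: chord_solution_def)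
  obtain un where un: "cn \<Longrightarrow> un \<in> S2 \<and> R (n - 1) un"
    using S2 by (auto simp: chord_solution_def)
  have pos: "c0 \<Longrightarrow> 0 < u0 \<and> u0 < k" "cn \<Longrightarrow> k < un \<and> un < n - 1"
    using u0 un sub by auto
  have in_T: "s0 \<Longrightarrow> 0 \<in> ?T" "sk \<Longrightarrow> k \<in> ?T" "sn \<Longrightarrow> n - 1 \<in> ?T"
    "c0 \<Longrightarrow> u0 \<in> ?T" "cn \<Longrightarrow> un \<in> ?T"
    using u0 un by (simp_all add: selected_def)
  have "dominated_twice ?T 0"
    by (rule dominated_twiceI[where xs = "[(s0, 0), (c0, u0), (sk, k), (sn, n - 1)]"])
      (use pos in_T u0 k closing count_0 in \<open>auto simp: add.assoc\<close>)
  moreover have "dominated_twice ?T (n - 1)"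
    by (rule dominated_twiceI[where xs = "[(s0, 0), (sk, k), (cn, un), (sn, n - 1)]"])
      (use pos in_T un k closing count_n edge_sym in \<open>auto simp: add.assoc\<close>)
  moreover have "v = 0 \<or> v \<in> {0<..<k} \<union> {k<..<n - 1} \<or> v = k \<or> v = n - 1" if "v < n" for v
    using that by auto
  ultimately have "\<forall>v<n. dominated_twice ?T v"
    using chord_solutions_glue[OF k S1 S2] dominated_twice_apex[OF k S1 S2 count_k] by blast
  moreover have "{0<..<k} \<union> {k<..<n - 1} \<union> {k, 0, n - 1} \<subseteq> {..<n}"
    using k by auto
  then have "?T \<subseteq> {..<n}"
    using sub unfolding selected_def by auto
  ultimately show ?thesis
    by (simp add: double_dominating_def dominated_twice_def)
qed

lemma realizes_root_glue:
  assumes n: "3 \<le> n" and k: "0 < k" "k < n - 1" "R 0 k" "R k (n - 1)"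
    and r1: "realizes 0 k s0 sk c0 c1k b1" and r2: "realizes k (n - 1) sk sn c2k cn b2"
    and count_k: "2 \<le> of_bool s0 + of_bool c1k + of_bool sk + of_bool c2k + (of_bool sn :: int)"
    and count_0: "2 \<le> of_bool s0 + of_bool c0 + of_bool sk + (of_bool sn :: int)"
    and count_n: "2 \<le> of_bool s0 + of_bool sk + of_bool cn + (of_bool sn :: int)"
    and size: "2 * (of_bool s0 + of_bool sk + of_bool sn) + b1 + b2
      \<le> 3 + of_bool t1 + of_bool t2 + of_bool (t1 \<and> t2)"
    and t1: "t1 \<Longrightarrow> k = 1" and t2: "t2 \<Longrightarrow> k = n - 2"
  shows "\<exists>S. double_dominating {..<n} R S \<and> 2 * card S \<le> n + ears {..<n}"
proof -
  obtain S1 where S1: "chord_solution 0 k s0 sk c0 c1k S1"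
    and size1: "2 * int (card S1) \<le> int (card {0<..<k}) + int (ears {0<..<k}) + b1"
    using r1 by (auto simp: realizes_def)
  obtain S2 where S2: "chord_solution k (n - 1) sk sn c2k cn S2"
    and size2: "2 * int (card S2) \<le> int (card {k<..<n - 1}) + int (ears {k<..<n - 1}) + b2"
    using r2 by (auto simp: realizes_def)
  have sub: "S1 \<subseteq> {0<..<k}" "S2 \<subseteq> {k<..<n - 1}"
    using S1 S2 by (simp_all add: chord_solution_def)
  define T where "T = S1 \<union> S2 \<union> selected sk k \<union> selected s0 0 \<union> selected sn (n - 1)"
  have "card T = card S1 + card S2 + of_bool sk + of_bool s0 + of_bool sn"
  proof -
    have "finite (S1 \<union> S2 \<union> selected sk k)" "0 \<notin> S1 \<union> S2 \<union> selected sk k"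
      "n - 1 \<notin> S1 \<union> S2 \<union> selected sk k" "0 \<noteq> n - 1"
      using sub k by (auto simp: selected_def dest: finite_subset)
    then show ?thesis
      using card_glued[OF sub, of sk] by (simp add: T_def selected_def)
  qed
  moreover have "int (ears {0<..<k}) + int (ears {k<..<n - 1}) + of_bool t1 + of_bool t2
      + of_bool (t1 \<and> t2) \<le> int (ears {..<n})"
    by (rule ears_root_ge[OF n k]) (use t1 t2 in auto)
  ultimately have "2 * int (card T) \<le> int n + int (ears {..<n})"
    using size1 size2 size k(1,2) by simp
  then have "2 * card T \<le> n + ears {..<n}"
    by linarith
  moreover have "double_dominating {..<n} R T"
    unfolding T_def using chord_solutions_root_glue[OF n k S1 S2 count_k count_0 count_n] .
  ultimately show ?thesis
    by blast
qed

end

type_synonym state = "bool \<times> bool \<times> bool \<times> bool"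
type_synonym profile = "(state \<times> int) list"

(* Gluing the edges ik and kj at the apex k: k becomes an interior vertex of ij, adding 1 to the
   interior count and, if ear holds, 1 to the count of degree-2 vertices. *)
definition glue_step :: "profile \<Rightarrow> profile \<Rightarrow> bool \<Rightarrow> state \<times> int \<Rightarrow> bool" where
  "glue_step w1 w2 ear = (\<lambda>((si, sj, ci, cj), b).
     \<exists>((si', sk, c1i, c1k), b1) \<in> set w1. \<exists>((sk', sj', c2k, c2j), b2) \<in> set w2.
       si' = si \<and> sk' = sk \<and> sj' = sj \<and>
       2 \<le> of_bool si + of_bool c1k + of_bool sk + of_bool c2k + (of_bool sj :: int) \<and>
       (ci \<longrightarrow> c1i \<or> sk) \<and> (cj \<longrightarrow> c2j \<or> sk) \<and>
       b1 + b2 + 2 * of_bool sk - 1 - of_bool ear \<le> b)"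

definition edge_profile :: profile where
  "edge_profile = [((si, sj, False, False), 0). si \<leftarrow> [False, True], sj \<leftarrow> [False, True]]"

definition chord_profiles :: "profile list" where
  "chord_profiles =
    [[((True, True, False, False), -2)],
     [((False, True, False, False), 0), ((False, True, True, False), 0),
      ((False, True, True, True), 0), ((True, False, False, False), 0),
      ((True, False, False, True), 0), ((True, False, True, False), 0),
      ((True, False, True, True), 0), ((True, True, False, False), -2)],
     [((False, True, False, False), -2), ((False, True, True, False), 0),
      ((False, True, True, True), 0), ((True, True, False, False), -2)],
     [((True, False, False, False), -1), ((True, False, False, True), -1),
      ((True, False, True, False), -1), ((True, False, True, True), -1),
      ((True, True, False, False), -1)],
     [((False, False, False, False), 0), ((False, False, False, True), 0),
      ((False, False, True, False), 0), ((False, False, True, True), 0),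
      ((False, True, False, False), 0), ((False, True, False, True), 0),
      ((False, True, True, False), 0), ((False, True, True, True), 0),
      ((True, False, False, False), 0), ((True, False, False, True), 0),
      ((True, False, True, False), 0), ((True, False, True, True), 0),
      ((True, True, False, False), 0)],
     [((True, False, False, False), -2), ((True, False, False, True), 0),
      ((True, False, True, False), -2), ((True, False, True, True), 0),
      ((True, True, False, False), -2)],
     [((False, False, False, False), 1), ((False, False, False, True), 1),
      ((False, False, True, False), 1), ((False, False, True, True), 1),
      ((False, True, False, False), -1), ((False, True, False, True), -1),
      ((False, True, True, False), 1), ((False, True, True, True), 1),
      ((True, False, False, False), -1), ((True, False, False, True), -1),
      ((True, False, True, False), 1), ((True, False, True, True), 1),
      ((True, True, False, False), -1)],
     [((False, False, False, False), 1), ((False, False, False, True), 1),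
      ((False, False, True, False), 1), ((False, False, True, True), 1),
      ((False, True, False, False), -1), ((False, True, True, False), -1),
      ((False, True, True, True), 1), ((True, False, False, False), -1),
      ((True, False, False, True), 1), ((True, False, True, False), -1),
      ((True, False, True, True), 1), ((True, True, False, False), -1)],
     [((False, True, False, False), -1), ((False, True, False, True), -1),
      ((False, True, True, False), -1), ((False, True, True, True), -1),
      ((True, True, False, False), -1)]]"

(* The flag marks cycle edges j = i + 1; the apex of two cycle edges has degree 2. *)
definition tagged_profiles :: "(profile \<times> bool) list" where
  "tagged_profiles = (edge_profile, True) # map (\<lambda>w. (w, False)) chord_profiles"

(* The root triangle 0 k (n - 1) adds its three vertices to the count of vertices; t1 (k = 1) makes 0,
   t2 (k = n - 2) makes n - 1, and both together make k a vertex of degree 2. *)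
definition root_step :: "profile \<Rightarrow> profile \<Rightarrow> bool \<Rightarrow> bool \<Rightarrow> bool" where
  "root_step w1 w2 t1 t2 \<longleftrightarrow>
     (\<exists>((s0, sk, c0, c1k), b1) \<in> set w1. \<exists>((sk', sn, c2k, cn), b2) \<in> set w2.
       sk' = sk \<and>
       2 \<le> of_bool s0 + of_bool c1k + of_bool sk + of_bool c2k + (of_bool sn :: int) \<and>
       2 \<le> of_bool s0 + of_bool c0 + of_bool sk + (of_bool sn :: int) \<and>
       2 \<le> of_bool s0 + of_bool sk + of_bool cn + (of_bool sn :: int) \<and>
       2 * (of_bool s0 + of_bool sk + of_bool sn) + b1 + b2
         \<le> 3 + of_bool t1 + of_bool t2 + of_bool (t1 \<and> t2))"

lemma chord_profiles_closed:
  "\<forall>(w1, t1) \<in> set tagged_profiles. \<forall>(w2, t2) \<in> set tagged_profiles.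
     \<exists>w \<in> set chord_profiles. \<forall>x \<in> set w. glue_step w1 w2 (t1 \<and> t2) x"
  by code_simp

lemma tagged_profiles_root:
  "\<forall>(w1, t1) \<in> set tagged_profiles. \<forall>(w2, t2) \<in> set tagged_profiles. root_step w1 w2 t1 t2"
  by code_simp

context triangulated_polygon
begin

definition realizes_profile :: "nat \<Rightarrow> nat \<Rightarrow> profile \<Rightarrow> bool" where
  "realizes_profile i j w \<longleftrightarrow> (\<forall>((si, sj, ci, cj), b) \<in> set w. realizes i j si sj ci cj b)"

lemma realizes_profile_glue:
  assumes ik: "i < k" "k < j" "R i k" "R k j"
    and w1: "realizes_profile i k w1" and w2: "realizes_profile k j w2"
    and ear: "ear \<Longrightarrow> degree {..<n} R k = 2"
    and glue: "\<forall>x \<in> set w. glue_step w1 w2 ear x"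
  shows "realizes_profile i j w"
  unfolding realizes_profile_def
proof (clarify)
  fix si sj ci cj b
  assume "((si, sj, ci, cj), b) \<in> set w"
  then obtain sk c1i c1k b1 c2k c2j b2 where
    e1: "((si, sk, c1i, c1k), b1) \<in> set w1" and e2: "((sk, sj, c2k, c2j), b2) \<in> set w2"
    and count: "2 \<le> of_bool si + of_bool c1k + of_bool sk + of_bool c2k + (of_bool sj :: int)"
    and c: "ci \<longrightarrow> c1i \<or> sk" "cj \<longrightarrow> c2j \<or> sk"
    and b: "b1 + b2 + 2 * of_bool sk - 1 - of_bool ear \<le> b"
    using glue unfolding glue_step_def by fastforce
  have "realizes i k si sk c1i c1k b1" "realizes k j sk sj c2k c2j b2"
    using w1 e1 w2 e2 unfolding realizes_profile_def by fastforce+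
  then show "realizes i j si sj ci cj b"
    using realizes_glue[OF ik _ _ count c ear] realizes_mono b by blast
qed

lemma chord_profile_exists:
  "R i j \<Longrightarrow> i < j \<Longrightarrow>
    \<exists>w t. (w, t) \<in> set tagged_profiles \<and> realizes_profile i j w \<and> (t \<longleftrightarrow> j = Suc i)"
proof (induction "j - i" arbitrary: i j rule: less_induct)
  case less
  show ?case
  proof (cases "j = Suc i")
    case True
    then have "realizes_profile i j edge_profile"
      using realizes_cycle_edge by (auto simp: realizes_profile_def edge_profile_def)
    with True show ?thesis
      by (auto simp: tagged_profiles_def)
  next
    case False
    with less.prems obtain k where k: "i < k" "k < j" "R i k" "R k j"
      using apex_exists by (metis Suc_lessI)
    have shorter: "k - i < j - i" "j - k < j - i"
      using k by auto
    obtain w1 t1 w2 t2 where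
      w1: "(w1, t1) \<in> set tagged_profiles" "realizes_profile i k w1" "t1 \<longleftrightarrow> k = Suc i" and
      w2: "(w2, t2) \<in> set tagged_profiles" "realizes_profile k j w2" "t2 \<longleftrightarrow> j = Suc k"
      using less.hyps[OF shorter(1) k(3,1)] less.hyps[OF shorter(2) k(4,2)] by blast
    obtain w where w: "w \<in> set chord_profiles" "\<forall>x \<in> set w. glue_step w1 w2 (t1 \<and> t2) x"
      using chord_profiles_closed w1(1) w2(1) by fastforce
    have "t1 \<and> t2 \<Longrightarrow> degree {..<n} R k = 2"
      using ear_apex[of i] less.prems(1) w1(3) w2(3) by auto
    then have "realizes_profile i j w"
      using realizes_profile_glue[OF k w1(2) w2(2) _ w(2)] by blast
    with w(1) False show ?thesis
      by (auto simp: tagged_profiles_def)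
  qed
qed

lemma double_dominating_set_exists:
  assumes n: "3 \<le> n"
  shows "\<exists>S. double_dominating {..<n} R S \<and> 2 * card S \<le> n + ears {..<n}"
proof -
  have "R 0 (n - 1)" "Suc 0 < n - 1"
    using closing_edge n by auto
  then obtain k where k: "0 < k" "k < n - 1" "R 0 k" "R k (n - 1)"
    by (rule apex_exists)
  obtain w1 t1 where w1: "(w1, t1) \<in> set tagged_profiles" "realizes_profile 0 k w1" "t1 \<longleftrightarrow> k = 1"
    using chord_profile_exists[of 0 k] k by auto
  obtain w2 t2 where w2: "(w2, t2) \<in> set tagged_profiles" "realizes_profile k (n - 1) w2"
      "t2 \<longleftrightarrow> n - 1 = Suc k"
    using chord_profile_exists[of k "n - 1"] k by auto
  have "root_step w1 w2 t1 t2"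
    using tagged_profiles_root w1(1) w2(1) by fastforce
  then obtain s0 sk c0 c1k b1 sn c2k cn b2 where
    e1: "((s0, sk, c0, c1k), b1) \<in> set w1" and e2: "((sk, sn, c2k, cn), b2) \<in> set w2"
    and counts: "2 \<le> of_bool s0 + of_bool c1k + of_bool sk + of_bool c2k + (of_bool sn :: int)"
      "2 \<le> of_bool s0 + of_bool c0 + of_bool sk + (of_bool sn :: int)"
      "2 \<le> of_bool s0 + of_bool sk + of_bool cn + (of_bool sn :: int)"
    and size: "2 * (of_bool s0 + of_bool sk + of_bool sn) + b1 + b2
      \<le> 3 + of_bool t1 + of_bool t2 + of_bool (t1 \<and> t2)"
    unfolding root_step_def by fastforce
  have "realizes 0 k s0 sk c0 c1k b1" "realizes k (n - 1) sk sn c2k cn b2"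
    using w1(2) e1 w2(2) e2 unfolding realizes_profile_def by fastforce+
  then show ?thesis
    by (rule realizes_root_glue[OF n k _ _ counts size]) (use w1(3) w2(3) in auto)
qed

end

theorem theorem3p5:
  fixes V :: "'a set" and E :: "'a \<Rightarrow> 'a \<Rightarrow> bool"
  assumes "maximal_outerplanar V E"
    and "card V \<ge> 3"
  shows "double_domination_number V E
           \<le> (card V + card {v \<in> V. degree V E v = 2}) div 2"
proof -
  let ?n = "card V"
  obtain g where g: "bij_betw g {..<?n} V"
    and polygon: "triangulated_polygon ?n (\<lambda>i j. i < ?n \<and> j < ?n \<and> E (g i) (g j))"
    using maximal_outerplanar_triangulated_polygon[OF assms(1)] by blast
  define R where "R i j \<longleftrightarrow> i < ?n \<and> j < ?n \<and> E (g i) (g j)" for i j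
  have adj: "\<And>x y. x \<in> {..<?n} \<Longrightarrow> y \<in> {..<?n} \<Longrightarrow> E (g x) (g y) \<longleftrightarrow> R x y"
    by (simp add: R_def)
  obtain S where S: "double_dominating {..<?n} R S"
    and size: "2 * card S \<le> ?n + triangulated_polygon.ears ?n R {..<?n}"
    using triangulated_polygon.double_dominating_set_exists[OF polygon[folded R_def] assms(2)] by blast
  have "finite V"
    using assms(2) by (intro card_ge_0_finite) simp
  then have "double_domination_number V E \<le> card (g ` S)"
    using double_dominating_image[where E = E and R = R, OF g adj S]
    by (rule double_domination_number_le)
  also have "card (g ` S) = card S"
    using S bij_betw_card_image_subset[OF g] by (simp add: double_dominating_def)
  finally show ?thesis
    using size card_degree_2_image[where E = E and R = R, OF g adj]
      triangulated_polygon.ears_def[OF polygon[folded R_def]]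
    by simp
qed

end
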